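(* $\mathsf{ICM}$ equals the variety generated by the class $\mathsf{ICF}$ of implicitly closed fields, and the term $t(x,y,z)=x(x-y)(x-y)^*+z(1-(x-y)(x-y)^* )$ satisfies, for every $\mathbf A\in\mathsf{ICF}$ and $a,b,c\in A$, $t^{\mathbf A}(a,b,c)=c$ if $a=b$ and $t^{\mathbf A}(a,b,c)=a$ otherwise. Consequently $\mathsf{ICM}$ is a discriminator variety.
   Context: A field is weakly rooted if it has characteristic $0$, or has prime characteristic $p$ and every element has a $p$-th root. Weak inverse: $a^*=a^{-1}$ if $a\ne0$, $0^*=0$. Weak $p$-root (in a weakly rooted field, $p$ prime): $r_p(a)=\sqrt[p]{a}$ if the characteristic is $p$, and $0$ otherwise. An implicitly closed field is a weakly rooted field (ring language) expanded by $(\,)^*$ and all $r_p$; $\mathsf{ICF}$ is their class. $\mathsf{ICM}$ is the class of algebras isomorphic to subalgebras of direct products of members of $\mathsf{ICF}$. A variety is a discriminator variety if it is generated by a class $\mathsf K$ admitting a term $t(x,y,z)$ with $t^{\mathbf A}(a,b,c)=c$ if $a=b$ and $=a$ otherwise, for all $\mathbf A\in\mathsf K$. *)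

theory Defs
  imports "HOL-Algebra.Ring" "HOL-Computational_Algebra.Primes"
begin

text \<open>Signature: 0, 1, binary +, unary -, binary *, the weak inverse ( )^*, and
  for every prime p the unary weak p-root r_p.  The component ic_root p is only
  relevant for prime p (homomorphisms/subalgebras only refer to prime p).\<close>

record 'a icalg =
  ic_carrier :: "'a set"
  ic_zero :: 'a
  ic_one :: 'a
  ic_add :: "'a \<Rightarrow> 'a \<Rightarrow> 'a"
  ic_neg :: "'a \<Rightarrow> 'a"
  ic_mul :: "'a \<Rightarrow> 'a \<Rightarrow> 'a"
  ic_star :: "'a \<Rightarrow> 'a"
  ic_root :: "nat \<Rightarrow> 'a \<Rightarrow> 'a"

definition ic_closed :: "'a icalg \<Rightarrow> 'a set \<Rightarrow> bool" where
  "ic_closed A S \<longleftrightarrow>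
     ic_zero A \<in> S \<and> ic_one A \<in> S \<and>
     (\<forall>x\<in>S. \<forall>y\<in>S. ic_add A x y \<in> S \<and> ic_mul A x y \<in> S) \<and>
     (\<forall>x\<in>S. ic_neg A x \<in> S \<and> ic_star A x \<in> S) \<and>
     (\<forall>p. prime p \<longrightarrow> (\<forall>x\<in>S. ic_root A p x \<in> S))"

definition ic_alg :: "'a icalg \<Rightarrow> bool" where
  "ic_alg A \<longleftrightarrow> ic_closed A (ic_carrier A)"

definition ic_hom :: "('a \<Rightarrow> 'b) \<Rightarrow> 'a icalg \<Rightarrow> 'b icalg \<Rightarrow> bool" where
  "ic_hom h A B \<longleftrightarrow>
     (\<forall>x\<in>ic_carrier A. h x \<in> ic_carrier B) \<and>
     h (ic_zero A) = ic_zero B \<and> h (ic_one A) = ic_one B \<and>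
     (\<forall>x\<in>ic_carrier A. \<forall>y\<in>ic_carrier A.
        h (ic_add A x y) = ic_add B (h x) (h y) \<and> h (ic_mul A x y) = ic_mul B (h x) (h y)) \<and>
     (\<forall>x\<in>ic_carrier A. h (ic_neg A x) = ic_neg B (h x) \<and> h (ic_star A x) = ic_star B (h x)) \<and>
     (\<forall>p. prime p \<longrightarrow> (\<forall>x\<in>ic_carrier A. h (ic_root A p x) = ic_root B p (h x)))"

definition ic_prod :: "'i set \<Rightarrow> ('i \<Rightarrow> 'k icalg) \<Rightarrow> ('i \<Rightarrow> 'k) icalg" where
  "ic_prod I F =
    \<lparr> ic_carrier = (\<Pi>\<^sub>E i\<in>I. ic_carrier (F i)),
      ic_zero = (\<lambda>i\<in>I. ic_zero (F i)),
      ic_one = (\<lambda>i\<in>I. ic_one (F i)),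
      ic_add = (\<lambda>f g. \<lambda>i\<in>I. ic_add (F i) (f i) (g i)),
      ic_neg = (\<lambda>f. \<lambda>i\<in>I. ic_neg (F i) (f i)),
      ic_mul = (\<lambda>f g. \<lambda>i\<in>I. ic_mul (F i) (f i) (g i)),
      ic_star = (\<lambda>f. \<lambda>i\<in>I. ic_star (F i) (f i)),
      ic_root = (\<lambda>p f. \<lambda>i\<in>I. ic_root (F i) p (f i)) \<rparr>"

definition to_ring :: "'a icalg \<Rightarrow> 'a ring" where
  "to_ring A = \<lparr> carrier = ic_carrier A, monoid.mult = ic_mul A, monoid.one = ic_one A,
                 ring.zero = ic_zero A, ring.add = ic_add A \<rparr>"

definition rchar :: "('a, 'm) ring_scheme \<Rightarrow> nat" where
  "rchar R = (if \<exists>n::nat>0. [n] \<cdot>\<^bsub>R\<^esub> \<one>\<^bsub>R\<^esub> = \<zero>\<^bsub>R\<^esub>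
                  then (LEAST n::nat. n > 0 \<and> [n] \<cdot>\<^bsub>R\<^esub> \<one>\<^bsub>R\<^esub> = \<zero>\<^bsub>R\<^esub>) else 0)"

definition weakly_rooted :: "('a, 'm) ring_scheme \<Rightarrow> bool" where
  "weakly_rooted R \<longleftrightarrow> field R \<and>
     (rchar R = 0 \<or>
      (prime (rchar R) \<and> (\<forall>a\<in>carrier R. \<exists>r\<in>carrier R. r [^]\<^bsub>R\<^esub> rchar R = a)))"

definition ICF :: "'a icalg \<Rightarrow> bool" where
  "ICF A \<longleftrightarrow>
     (let R = to_ring A in
       weakly_rooted R \<and>
       (\<forall>x\<in>carrier R. ic_neg A x = \<ominus>\<^bsub>R\<^esub> x) \<and>
       (\<forall>x\<in>carrier R. ic_star A x = (if x = \<zero>\<^bsub>R\<^esub> then \<zero>\<^bsub>R\<^esub> else inv\<^bsub>R\<^esub> x)) \<and>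
       (\<forall>p. prime p \<longrightarrow> (\<forall>a\<in>carrier R.
          ic_root A p a = (if rchar R = p then (THE r. r \<in> carrier R \<and> r [^]\<^bsub>R\<^esub> p = a)
                           else \<zero>\<^bsub>R\<^esub>))))"

definition ISP_via :: "('k icalg \<Rightarrow> bool) \<Rightarrow> 'i set \<Rightarrow> ('i \<Rightarrow> 'k icalg) \<Rightarrow> 'a icalg \<Rightarrow> bool" where
  "ISP_via K I F A \<longleftrightarrow> ic_alg A \<and> (\<forall>i\<in>I. K (F i)) \<and>
     (\<exists>h. ic_hom h A (ic_prod I F) \<and> inj_on h (ic_carrier A))"

definition HSP_via :: "('k icalg \<Rightarrow> bool) \<Rightarrow> 'i set \<Rightarrow> ('i \<Rightarrow> 'k icalg) \<Rightarrow> 'a icalg \<Rightarrow> bool" where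
  "HSP_via K I F A \<longleftrightarrow> ic_alg A \<and> (\<forall>i\<in>I. K (F i)) \<and>
     (\<exists>S h. S \<subseteq> ic_carrier (ic_prod I F) \<and> ic_closed (ic_prod I F) S \<and>
            ic_hom h ((ic_prod I F)\<lparr>ic_carrier := S\<rparr>) A \<and> h ` S = ic_carrier A)"

definition disc_t :: "'a icalg \<Rightarrow> 'a \<Rightarrow> 'a \<Rightarrow> 'a \<Rightarrow> 'a" where
  "disc_t A x y z =
     (let d = ic_add A x (ic_neg A y); e = ic_mul A d (ic_star A d) in
      ic_add A (ic_mul A x e) (ic_mul A z (ic_add A (ic_one A) (ic_neg A e))))"

definition is_discriminator_term ::
    "('a icalg \<Rightarrow> bool) \<Rightarrow> ('a icalg \<Rightarrow> 'a \<Rightarrow> 'a \<Rightarrow> 'a \<Rightarrow> 'a) \<Rightarrow> bool" where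
  "is_discriminator_term K t \<longleftrightarrow>
     (\<forall>A. K A \<longrightarrow> (\<forall>a\<in>ic_carrier A. \<forall>b\<in>ic_carrier A. \<forall>c\<in>ic_carrier A.
        t A a b c = (if a = b then c else a)))"

end

(* An implicitly closed field satisfies the commutative ring axioms, x x* x = x, x* x x* = x*,
   and for every prime p the equations r_p(x)^p = x - x p p* and r_p(x) p = 0; equations are
   preserved by products, subalgebras and homomorphic images.  Conversely, let A satisfy these
   equations.  Every x <> 0 of A lies outside a maximal ideal containing the non-unit 1 - x x*; the
   quotient of A by any maximal ideal is a field on which * is the weak inverse and r_p the weak
   p-root; p-th roots are unique there because Frobenius is injective.  Separating every pair
   a <> b by such a quotient embeds A into a product of implicitly closed fields.  Finally, in a
   field (x - y)(x - y)* is 0 if x = y and 1 otherwise, so t is a discriminator. *)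

theory Submission
  imports Defs "HOL-Algebra.QuotRing" "HOL-Algebra.Ring_Divisibility" "HOL-Algebra.Weak_Morphisms"
begin

hide_const (open) Divisibility.prime

section \<open>Characteristic and Frobenius\<close>

context ring
begin

lemma rchar_eq_Least:
  assumes "\<exists>n::nat>0. [n] \<cdot> \<one> = \<zero>"
  shows "rchar R = (LEAST n::nat. n > 0 \<and> [n] \<cdot> \<one> = \<zero>)"
  using assms unfolding rchar_def by simp

lemma rchar_pos_iff: "rchar R > 0 \<longleftrightarrow> (\<exists>n::nat>0. [n] \<cdot> \<one> = \<zero>)"
  using LeastI_ex[of "\<lambda>n::nat. n > 0 \<and> [n] \<cdot> \<one> = \<zero>"] rchar_eq_Least
  unfolding rchar_def by auto

lemma add_pow_rchar_one [simp]: "[rchar R] \<cdot> \<one> = \<zero>"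
proof (cases "rchar R = 0")
  case False
  then have ex: "\<exists>n::nat>0. [n] \<cdot> \<one> = \<zero>"
    using rchar_pos_iff by simp
  show ?thesis
    using LeastI_ex[OF ex] rchar_eq_Least[OF ex] by simp
qed simp

lemma add_pow_one_neq_zero_below_rchar:
  assumes "0 < n" "n < rchar R"
  shows "[n] \<cdot> \<one> \<noteq> \<zero>"
proof
  assume n: "[n] \<cdot> \<one> = \<zero>"
  with assms(1) have "rchar R = (LEAST n::nat. n > 0 \<and> [n] \<cdot> \<one> = \<zero>)"
    using rchar_eq_Least by blast
  with n assms(1) have "rchar R \<le> n"
    by (simp add: Least_le)
  with assms(2) show False by simp
qed

lemma add_pow_one_eq_zero_iff: "[n] \<cdot> \<one> = \<zero> \<longleftrightarrow> rchar R dvd n"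
proof
  assume n: "[n] \<cdot> \<one> = \<zero>"
  show "rchar R dvd n"
  proof (cases "rchar R = 0")
    case True
    with n rchar_pos_iff show ?thesis
      by (metis dvd_0_right neq0_conv)
  next
    case False
    have "[n] \<cdot> \<one> = [(n mod rchar R)] \<cdot> \<one> \<oplus> [(rchar R * (n div rchar R))] \<cdot> \<one>"
      using add.nat_pow_mult[of \<one> "n mod rchar R" "rchar R * (n div rchar R)"] by simp
    also have "[(rchar R * (n div rchar R))] \<cdot> \<one> = \<zero>"
      using add.nat_pow_pow[of \<one> "n div rchar R" "rchar R"] by (simp add: mult.commute)
    finally have "[(n mod rchar R)] \<cdot> \<one> = \<zero>"
      using n by simp
    moreover have "n mod rchar R < rchar R"
      using False by simp
    ultimately have "n mod rchar R = 0"
      using add_pow_one_neq_zero_below_rchar[of "n mod rchar R"] by (cases "n mod rchar R = 0") auto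
    then show ?thesis by auto
  qed
next
  assume "rchar R dvd n"
  then obtain k where "n = rchar R * k" by (elim dvdE)
  then show "[n] \<cdot> \<one> = \<zero>"
    using add.nat_pow_pow[of \<one> k "rchar R"] by (simp add: mult.commute)
qed

lemma add_pow_one_mult: "[(m * n :: nat)] \<cdot> \<one> = [m] \<cdot> \<one> \<otimes> [n] \<cdot> \<one>"
  using add_pow_ldistr[of \<one> "[n] \<cdot> \<one>" m] add.nat_pow_pow[of \<one> m n]
  by (simp add: mult.commute)

lemma rchar_neq_one: "\<one> \<noteq> \<zero> \<Longrightarrow> rchar R \<noteq> 1"
  by (metis One_nat_def add.nat_pow_0 add.nat_pow_Suc add_pow_rchar_one l_zero one_closed)

end

lemma (in domain) rchar_zero_or_prime: "rchar R = 0 \<or> prime (rchar R)"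
proof (rule ccontr)
  assume "\<not> ?thesis"
  then have q: "rchar R \<noteq> 0" "\<not> prime (rchar R)" by auto
  have "rchar R \<noteq> 1"
    using rchar_neq_one[OF one_not_zero] .
  with q obtain m where m: "m dvd rchar R" "m \<noteq> 1" "m \<noteq> rchar R"
    by (auto simp: prime_nat_iff)
  then obtain k where k: "rchar R = m * k" by (elim dvdE)
  have pos: "0 < m" "0 < k"
    using k q(1) by auto
  have "m \<le> rchar R" "k \<le> rchar R"
    using k q(1) by (simp_all add: dvd_imp_le)
  moreover have "k \<noteq> rchar R"
    using k m(2) pos by auto
  ultimately have mk: "0 < m" "m < rchar R" "0 < k" "k < rchar R"
    using m(3) pos by auto
  have "[m] \<cdot> \<one> \<otimes> [k] \<cdot> \<one> = \<zero>"
    using add_pow_one_mult[of m k] k add_pow_rchar_one by metis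
  then have "[m] \<cdot> \<one> = \<zero> \<or> [k] \<cdot> \<one> = \<zero>"
    using integral by auto
  with mk show False
    using add_pow_one_neq_zero_below_rchar by blast
qed

lemma (in domain) add_pow_prime_eq_zero_iff:
  assumes "prime p"
  shows "[p] \<cdot> \<one> = \<zero> \<longleftrightarrow> rchar R = p"
proof -
  have "rchar R \<noteq> 1"
    using rchar_neq_one[OF one_not_zero] .
  with assms show ?thesis
    unfolding add_pow_one_eq_zero_iff by (auto simp: prime_nat_iff)
qed

context cring
begin

lemma binomial_expansion:
  assumes a: "a \<in> carrier R" and b: "b \<in> carrier R"
  shows "(a \<oplus> b) [^] n = (\<Oplus>k\<in>{..n}. [(n choose k)] \<cdot> (a [^] k \<otimes> b [^] (n - k)))"
proof (induction n)
  case 0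
  then show ?case using a b by simp
next
  case (Suc n)
  define S where "S = (\<Oplus>k\<in>{..n}. [(n choose k)] \<cdot> (a [^] k \<otimes> b [^] (n - k)))"
  define L where "L = (\<Oplus>k\<in>{..n}. [(n choose k)] \<cdot> (a [^] Suc k \<otimes> b [^] (n - k)))"
  define H where "H = (\<Oplus>k\<in>{..n}. [(n choose Suc k)] \<cdot> (a [^] Suc k \<otimes> b [^] (n - k)))"
  have "S \<otimes> a = (\<Oplus>k\<in>{..n}. [(n choose k)] \<cdot> (a [^] k \<otimes> b [^] (n - k)) \<otimes> a)"
    unfolding S_def using a b by (simp add: finsum_ldistr)
  also have "\<dots> = L"
    unfolding L_def using a b by (intro finsum_cong') (auto simp: add_pow_ldistr add_pow_rdistr m_ac)
  finally have Sa: "S \<otimes> a = L" .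
  have "S \<otimes> b = (\<Oplus>k\<in>{..n}. [(n choose k)] \<cdot> (a [^] k \<otimes> b [^] (n - k)) \<otimes> b)"
    unfolding S_def using a b by (simp add: finsum_ldistr)
  also have "\<dots> = (\<Oplus>k\<in>{..n}. [(n choose k)] \<cdot> (a [^] k \<otimes> b [^] (Suc n - k)))"
    using a b by (intro finsum_cong') (auto simp: add_pow_ldistr m_assoc Suc_diff_le)
  also have "\<dots> = (\<Oplus>k\<in>{..Suc n}. [(n choose k)] \<cdot> (a [^] k \<otimes> b [^] (Suc n - k)))"
    using a b by (simp add: binomial_eq_0)
  also have "\<dots> = H \<oplus> b [^] Suc n"
    unfolding H_def using a b by (subst finsum_Suc2) auto
  finally have Sb: "S \<otimes> b = H \<oplus> b [^] Suc n" .
  have "(\<Oplus>k\<in>{..n}. [(Suc n choose Suc k)] \<cdot> (a [^] Suc k \<otimes> b [^] (n - k)))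
      = (\<Oplus>k\<in>{..n}. [(n choose k)] \<cdot> (a [^] Suc k \<otimes> b [^] (n - k))
                     \<oplus> [(n choose Suc k)] \<cdot> (a [^] Suc k \<otimes> b [^] (n - k)))"
    using a b by (intro finsum_cong') (auto simp: add.nat_pow_mult)
  also have "\<dots> = L \<oplus> H"
    unfolding L_def H_def using a b by (intro finsum_addf) auto
  finally have Pascal: "(\<Oplus>k\<in>{..n}. [(Suc n choose Suc k)] \<cdot> (a [^] Suc k \<otimes> b [^] (n - k))) = L \<oplus> H" .
  have "S \<in> carrier R" "L \<in> carrier R" "H \<in> carrier R"
    unfolding S_def L_def H_def using a b by (auto intro: finsum_closed)
  then have "(a \<oplus> b) [^] Suc n = (L \<oplus> H) \<oplus> b [^] Suc n"
    using a b Suc by (simp add: S_def[symmetric] r_distr Sa Sb a_assoc)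
  moreover have "(\<Oplus>k\<in>{..Suc n}. [(Suc n choose k)] \<cdot> (a [^] k \<otimes> b [^] (Suc n - k)))
      = (\<Oplus>k\<in>{..n}. [(Suc n choose Suc k)] \<cdot> (a [^] Suc k \<otimes> b [^] (n - k))) \<oplus> b [^] Suc n"
    using a b by (subst finsum_Suc2) auto
  ultimately show ?case
    unfolding Pascal by simp
qed

lemma freshmans_dream:
  fixes p :: nat
  assumes p: "prime p" and char: "[p] \<cdot> \<one> = \<zero>"
    and a: "a \<in> carrier R" and b: "b \<in> carrier R"
  shows "(a \<oplus> b) [^] p = a [^] p \<oplus> b [^] p"
proof -
  have inner_terms: "[(p choose k)] \<cdot> x = \<zero>" if "0 < k" "k < p" "x \<in> carrier R" for k x
  proof -
    have "p dvd (p choose k)"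
      using dvd_choose_prime[of k p] that p by auto
    then obtain m where m: "p choose k = p * m" by (elim dvdE)
    have "[p] \<cdot> x = \<zero>"
      using that(3) char add_pow_ldistr[of \<one> x p] by simp
    then show ?thesis
      using m that(3) add.nat_pow_pow[of x m p] by (simp add: mult.commute)
  qed
  have "{..p} = insert p (insert 0 {1..<p})"
    using prime_gt_0_nat[OF p] by auto
  then have "(a \<oplus> b) [^] p
      = (\<Oplus>k\<in>insert p (insert 0 {1..<p}). [(p choose k)] \<cdot> (a [^] k \<otimes> b [^] (p - k)))"
    using binomial_expansion[OF a b] by simp
  also have "\<dots> = a [^] p \<oplus> (b [^] p \<oplus> (\<Oplus>k\<in>{1..<p}. [(p choose k)] \<cdot> (a [^] k \<otimes> b [^] (p - k))))"
    using a b prime_gt_0_nat[OF p] by (simp add: finsum_insert)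
  also have "(\<Oplus>k\<in>{1..<p}. [(p choose k)] \<cdot> (a [^] k \<otimes> b [^] (p - k))) = (\<Oplus>k\<in>{1..<p}. \<zero>)"
    using a b inner_terms by (intro finsum_cong') auto
  finally show ?thesis
    using a b by simp
qed

end

context "domain"
begin

lemma nat_pow_eq_zero_imp_zero: "x \<in> carrier R \<Longrightarrow> x [^] (n::nat) = \<zero> \<Longrightarrow> x = \<zero>"
  by (induction n) (auto simp: integral_iff)

lemma frobenius_inj:
  fixes p :: nat
  assumes p: "prime p" and char: "[p] \<cdot> \<one> = \<zero>"
    and a: "a \<in> carrier R" and b: "b \<in> carrier R" and eq: "a [^] p = b [^] p"
  shows "a = b"
proof -
  have "b [^] p = (a \<ominus> b) [^] p \<oplus> b [^] p"
    using freshmans_dream[OF p char, of "a \<ominus> b" b] a b eq by (simp add: minus_eq a_assoc l_neg)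
  then have "(a \<ominus> b) [^] p = \<zero>"
    using a b by (metis add.r_cancel_one' minus_closed nat_pow_closed)
  then have "a \<ominus> b = \<zero>"
    using a b nat_pow_eq_zero_imp_zero by blast
  then show ?thesis
    using a b by simp
qed

lemma the_root_eq:
  fixes p :: nat
  assumes p: "prime p" and char: "rchar R = p" and r: "r \<in> carrier R" "r [^] p = a"
  shows "(THE r. r \<in> carrier R \<and> r [^] p = a) = r"
proof (rule the_equality)
  fix s assume "s \<in> carrier R \<and> s [^] p = a"
  with p char r show "s = r"
    using frobenius_inj[OF p] add_pow_prime_eq_zero_iff[OF p] by metis
qed (use r in simp)

end

section \<open>Maximal ideals and quotients\<close>

lemma (in ring) exists_maximalideal_superset:
  assumes I: "ideal I R" and one: "\<one> \<notin> I"
  shows "\<exists>M. maximalideal M R \<and> I \<subseteq> M"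
proof -
  let ?S = "{J. ideal J R \<and> I \<subseteq> J \<and> \<one> \<notin> J}"
  have "\<exists>M\<in>?S. \<forall>J\<in>?S. M \<subseteq> J \<longrightarrow> J = M"
  proof (rule subset_Zorn_nonempty)
    show "?S \<noteq> {}"
      using I one by blast
    fix C assume ne: "C \<noteq> {}" and ch: "subset.chain ?S C"
    then have C: "C \<subseteq> ?S"
      by (simp add: pred_on.chain_def)
    obtain J where "J \<in> C"
      using ne by blast
    have "subset.chain {J. ideal J R} C"
      using ch unfolding pred_on.chain_def by auto
    then have "ideal (\<Union>C) R"
      using chain_Union_is_ideal[of C] ne by simp
    moreover have "I \<subseteq> \<Union>C"
      using C \<open>J \<in> C\<close> by auto
    moreover have "\<one> \<notin> \<Union>C"
      using C by auto
    ultimately show "\<Union>C \<in> ?S"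
      by simp
  qed
  then obtain M where M: "ideal M R" "I \<subseteq> M" "\<one> \<notin> M"
    and M_max: "\<And>J. ideal J R \<Longrightarrow> I \<subseteq> J \<Longrightarrow> \<one> \<notin> J \<Longrightarrow> M \<subseteq> J \<Longrightarrow> J = M"
    by auto
  have "maximalideal M R"
  proof (rule maximalidealI[OF M(1)])
    show "carrier R \<noteq> M"
      using M(3) by auto
    fix J assume J: "ideal J R" "M \<subseteq> J" "J \<subseteq> carrier R"
    show "J = M \<or> J = carrier R"
    proof (cases "\<one> \<in> J")
      case True
      then show ?thesis
        using ideal.one_imp_carrier[OF J(1)] by simp
    next
      case False
      then show ?thesis
        using M_max[OF J(1) _ False J(2)] M(2) J(2) by blast
    qed
  qed
  with M(2) show ?thesis by blast
qed

lemma (in cring) exists_maximalideal_not_mem: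
  assumes x: "x \<in> carrier R" "x \<noteq> \<zero>" and s: "s \<in> carrier R" and regular: "x \<otimes> s \<otimes> x = x"
  shows "\<exists>M. maximalideal M R \<and> x \<notin> M"
proof -
  define e where "e = x \<otimes> s"
  have e: "e \<in> carrier R" "e \<otimes> x = x"
    using x s regular by (simp_all add: e_def)
  have "\<one> \<notin> PIdl (\<one> \<ominus> e)"
  proof
    assume "\<one> \<in> PIdl (\<one> \<ominus> e)"
    then obtain y where y: "y \<in> carrier R" "\<one> = y \<otimes> (\<one> \<ominus> e)"
      by (auto simp: cgenideal_def)
    have "x = y \<otimes> (\<one> \<ominus> e) \<otimes> x"
      using x(1) y(2) by simp
    also have "\<dots> = y \<otimes> (x \<ominus> e \<otimes> x)"
      using x(1) y(1) e(1) by algebra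
    also have "\<dots> = \<zero>"
      using x(1) y(1) e by (simp add: minus_eq r_neg)
    finally show False
      using x(2) by contradiction
  qed
  moreover have "ideal (PIdl (\<one> \<ominus> e)) R"
    using e(1) by (simp add: cgenideal_ideal)
  ultimately obtain M where M: "maximalideal M R" "PIdl (\<one> \<ominus> e) \<subseteq> M"
    using exists_maximalideal_superset by blast
  interpret M: maximalideal M R
    by (rule M(1))
  have "\<one> \<ominus> e \<in> M"
    using M(2) cgenideal_self e(1) by blast
  moreover have "x \<in> M \<Longrightarrow> e \<in> M"
    using s by (simp add: e_def M.I_r_closed)
  moreover have "\<one> = (\<one> \<ominus> e) \<oplus> e"
    using e(1) by algebra
  ultimately have "x \<in> M \<Longrightarrow> \<one> \<in> M"
    by (metis M.a_closed)
  then have "x \<notin> M"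
    using M.I_notcarr M.one_imp_carrier by auto
  with M(1) show ?thesis
    by blast
qed

lemma (in field) weak_inverse_unique:
  assumes a: "a \<in> carrier R" and b: "b \<in> carrier R"
    and aba: "a \<otimes> b \<otimes> a = a" and bab: "b \<otimes> a \<otimes> b = b"
  shows "b = (if a = \<zero> then \<zero> else inv a)"
proof (cases "a = \<zero>")
  case True
  then show ?thesis
    using b bab by simp
next
  case False
  then have "a \<otimes> b = \<one>"
    using a b aba by (metis l_one m_closed m_rcancel one_closed)
  with False a b show ?thesis
    by (simp add: comm_inv_char)
qed

text \<open>Choosing a representative of each coset keeps \<open>R Quot I\<close> on the element type of \<open>R\<close>,
  as required for the factors of the subdirect product in the main theorem.\<close>

definition coset_rep :: "('a, 'm) ring_scheme \<Rightarrow> 'a set \<Rightarrow> 'a \<Rightarrow> 'a" where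
  "coset_rep R I x = (SOME y. y \<in> I +>\<^bsub>R\<^esub> x)"

lemma (in ideal) weak_ring_morphism_coset_rep: "weak_ring_morphism (coset_rep R I) I R"
proof (rule weak_ring_morphismI[OF is_ideal])
  have coset_eq: "I +> coset_rep R I x = I +> x" if "x \<in> carrier R" for x
  proof -
    have "coset_rep R I x \<in> I +> x"
      unfolding coset_rep_def using a_rcos_self[OF that] by (rule someI)
    then show ?thesis
      using a_repr_independence'[OF _ that] by simp
  qed
  fix a b assume a: "a \<in> carrier R" and b: "b \<in> carrier R"
  have "coset_rep R I a = coset_rep R I b \<longleftrightarrow> I +> a = I +> b"
  proof
    assume "coset_rep R I a = coset_rep R I b"
    then show "I +> a = I +> b"
      using coset_eq[OF a, symmetric] coset_eq[OF b] by simp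
  qed (simp add: coset_rep_def)
  also have "\<dots> \<longleftrightarrow> a \<in> I +> b"
  proof
    assume "I +> a = I +> b"
    then show "a \<in> I +> b"
      using a_rcos_self[OF a] by simp
  next
    assume "a \<in> I +> b"
    then show "I +> a = I +> b"
      using a_repr_independence'[OF _ b] by simp
  qed
  also have "\<dots> \<longleftrightarrow> a \<ominus> b \<in> I"
    using a_rcos_module_minus[OF ring_axioms b a] .
  finally show "coset_rep R I a = coset_rep R I b \<longleftrightarrow> a \<ominus> b \<in> I" .
qed

section \<open>Equations and their preservation under \<open>H\<close>, \<open>S\<close>, \<open>P\<close>\<close>

datatype ic_term =
    TVar nat | TZero | TOne | TAdd ic_term ic_term | TNeg ic_term
  | TMul ic_term ic_term | TStar ic_term | TRoot nat ic_term

primrec ic_eval :: "'a icalg \<Rightarrow> (nat \<Rightarrow> 'a) \<Rightarrow> ic_term \<Rightarrow> 'a" where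
  "ic_eval A \<rho> (TVar n) = \<rho> n"
| "ic_eval A \<rho> TZero = ic_zero A"
| "ic_eval A \<rho> TOne = ic_one A"
| "ic_eval A \<rho> (TAdd s t) = ic_add A (ic_eval A \<rho> s) (ic_eval A \<rho> t)"
| "ic_eval A \<rho> (TNeg t) = ic_neg A (ic_eval A \<rho> t)"
| "ic_eval A \<rho> (TMul s t) = ic_mul A (ic_eval A \<rho> s) (ic_eval A \<rho> t)"
| "ic_eval A \<rho> (TStar t) = ic_star A (ic_eval A \<rho> t)"
| "ic_eval A \<rho> (TRoot p t) = ic_root A p (ic_eval A \<rho> t)"

primrec ic_wf_term :: "ic_term \<Rightarrow> bool" where
  "ic_wf_term (TVar n) = True"
| "ic_wf_term TZero = True"
| "ic_wf_term TOne = True"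
| "ic_wf_term (TAdd s t) = (ic_wf_term s \<and> ic_wf_term t)"
| "ic_wf_term (TNeg t) = ic_wf_term t"
| "ic_wf_term (TMul s t) = (ic_wf_term s \<and> ic_wf_term t)"
| "ic_wf_term (TStar t) = ic_wf_term t"
| "ic_wf_term (TRoot p t) = (prime p \<and> ic_wf_term t)"

definition ic_satisfies :: "'a icalg \<Rightarrow> ic_term \<Rightarrow> ic_term \<Rightarrow> bool" where
  "ic_satisfies A s t \<longleftrightarrow>
     (\<forall>\<rho>. range \<rho> \<subseteq> ic_carrier A \<longrightarrow> ic_eval A \<rho> s = ic_eval A \<rho> t)"

lemma ic_eval_closed:
  "ic_closed A C \<Longrightarrow> range \<rho> \<subseteq> C \<Longrightarrow> ic_wf_term t \<Longrightarrow> ic_eval A \<rho> t \<in> C"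
  by (induction t) (auto simp: ic_closed_def)

lemma ic_hom_eval:
  assumes h: "ic_hom h A B" and A: "ic_alg A" and \<rho>: "range \<rho> \<subseteq> ic_carrier A"
    and t: "ic_wf_term t"
  shows "h (ic_eval A \<rho> t) = ic_eval B (h \<circ> \<rho>) t"
proof -
  have closed: "ic_wf_term u \<Longrightarrow> ic_eval A \<rho> u \<in> ic_carrier A" for u
    using ic_eval_closed A \<rho> by (auto simp: ic_alg_def)
  from t show ?thesis
    using h \<rho> by (induction t) (auto simp: ic_hom_def closed)
qed

lemma ic_eval_carrier_update [simp]: "ic_eval (A\<lparr>ic_carrier := S\<rparr>) \<rho> t = ic_eval A \<rho> t"
  by (induction t) auto

lemma ic_eval_prod: "i \<in> I \<Longrightarrow> ic_eval (ic_prod I F) \<rho> t i = ic_eval (F i) (\<lambda>n. \<rho> n i) t"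
  by (induction t) (auto simp: ic_prod_def)

lemma ic_eval_prod_extensional:
  "range \<rho> \<subseteq> extensional I \<Longrightarrow> ic_eval (ic_prod I F) \<rho> t \<in> extensional I"
  by (cases t) (auto simp: ic_prod_def)

lemma ic_alg_carrier_update: "ic_closed A S \<Longrightarrow> ic_alg (A\<lparr>ic_carrier := S\<rparr>)"
  by (simp add: ic_alg_def ic_closed_def)

lemma ic_satisfies_prod:
  assumes "\<And>i. i \<in> I \<Longrightarrow> ic_satisfies (F i) s t"
  shows "ic_satisfies (ic_prod I F) s t"
  unfolding ic_satisfies_def
proof (intro allI impI)
  fix \<rho> :: "nat \<Rightarrow> _" assume \<rho>: "range \<rho> \<subseteq> ic_carrier (ic_prod I F)"
  then have ext: "range \<rho> \<subseteq> extensional I"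
    by (force simp: ic_prod_def PiE_iff)
  show "ic_eval (ic_prod I F) \<rho> s = ic_eval (ic_prod I F) \<rho> t"
  proof (rule extensionalityI[OF ic_eval_prod_extensional[OF ext] ic_eval_prod_extensional[OF ext]])
    fix i assume i: "i \<in> I"
    then have "range (\<lambda>n. \<rho> n i) \<subseteq> ic_carrier (F i)"
      using \<rho> by (auto simp: ic_prod_def)
    with i assms show "ic_eval (ic_prod I F) \<rho> s i = ic_eval (ic_prod I F) \<rho> t i"
      by (simp add: ic_eval_prod ic_satisfies_def)
  qed
qed

lemma ic_satisfies_subalgebra:
  "ic_satisfies A s t \<Longrightarrow> S \<subseteq> ic_carrier A \<Longrightarrow> ic_satisfies (A\<lparr>ic_carrier := S\<rparr>) s t"
  by (auto simp: ic_satisfies_def)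

lemma ic_satisfies_hom_image:
  assumes At: "ic_satisfies A s t" and A: "ic_alg A" and h: "ic_hom h A B"
    and onto: "h ` ic_carrier A = ic_carrier B" and wf: "ic_wf_term s" "ic_wf_term t"
  shows "ic_satisfies B s t"
  unfolding ic_satisfies_def
proof (intro allI impI)
  fix \<rho> :: "nat \<Rightarrow> _" assume \<rho>: "range \<rho> \<subseteq> ic_carrier B"
  define \<sigma> where "\<sigma> = inv_into (ic_carrier A) h \<circ> \<rho>"
  have \<sigma>: "range \<sigma> \<subseteq> ic_carrier A"
    using \<rho> onto by (auto simp: \<sigma>_def inv_into_into)
  have "h \<circ> \<sigma> = \<rho>"
    using \<rho> onto by (auto simp: \<sigma>_def fun_eq_iff intro!: f_inv_into_f)
  then show "ic_eval B \<rho> s = ic_eval B \<rho> t"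
    using ic_hom_eval[OF h A \<sigma>] wf At \<sigma> by (metis ic_satisfies_def)
qed

lemma HSP_via_satisfies:
  assumes "HSP_via K I F A" and K: "\<And>B. K B \<Longrightarrow> ic_satisfies B s t"
    and wf: "ic_wf_term s" "ic_wf_term t"
  shows "ic_satisfies A s t"
proof -
  from assms(1) obtain S h where S: "S \<subseteq> ic_carrier (ic_prod I F)" "ic_closed (ic_prod I F) S"
    and h: "ic_hom h ((ic_prod I F)\<lparr>ic_carrier := S\<rparr>) A" "h ` S = ic_carrier A"
    and FK: "\<forall>i\<in>I. K (F i)"
    unfolding HSP_via_def by blast
  have "ic_satisfies ((ic_prod I F)\<lparr>ic_carrier := S\<rparr>) s t"
    using ic_satisfies_prod[of I F s t] FK K S(1) by (simp add: ic_satisfies_subalgebra)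
  then show ?thesis
    using ic_satisfies_hom_image ic_alg_carrier_update[OF S(2)] h wf by fastforce
qed

lemma ic_hom_image_ops:
  assumes "ic_hom h A B"
  shows "ic_zero B = h (ic_zero A)" "ic_one B = h (ic_one A)"
    "x \<in> ic_carrier A \<Longrightarrow> y \<in> ic_carrier A \<Longrightarrow> ic_add B (h x) (h y) = h (ic_add A x y)"
    "x \<in> ic_carrier A \<Longrightarrow> y \<in> ic_carrier A \<Longrightarrow> ic_mul B (h x) (h y) = h (ic_mul A x y)"
    "x \<in> ic_carrier A \<Longrightarrow> ic_neg B (h x) = h (ic_neg A x)"
    "x \<in> ic_carrier A \<Longrightarrow> ic_star B (h x) = h (ic_star A x)"
    "prime p \<Longrightarrow> x \<in> ic_carrier A \<Longrightarrow> ic_root B p (h x) = h (ic_root A p x)"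
  using assms by (simp_all add: ic_hom_def)

lemma ic_closed_hom_image:
  assumes "ic_hom h A B" "ic_alg A"
  shows "ic_closed B (h ` ic_carrier A)"
  using assms(2) ic_hom_image_ops[OF assms(1)] unfolding ic_alg_def ic_closed_def by auto

lemma ic_hom_inv_into:
  assumes "ic_hom h A B" "ic_alg A" "inj_on h (ic_carrier A)"
  shows "ic_hom (inv_into (ic_carrier A) h) (B\<lparr>ic_carrier := h ` ic_carrier A\<rparr>) A"
  using assms(2,3) ic_hom_image_ops[OF assms(1)] unfolding ic_alg_def ic_closed_def ic_hom_def
  by auto

lemma ISP_via_imp_HSP_via:
  assumes "ISP_via K I F A"
  shows "HSP_via K I F A"
proof -
  from assms obtain h where A: "ic_alg A" and K: "\<forall>i\<in>I. K (F i)"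
    and h: "ic_hom h A (ic_prod I F)" and inj: "inj_on h (ic_carrier A)"
    unfolding ISP_via_def by blast
  have "h ` ic_carrier A \<subseteq> ic_carrier (ic_prod I F)"
    using h by (auto simp: ic_hom_def)
  moreover have "inv_into (ic_carrier A) h ` h ` ic_carrier A = ic_carrier A"
    using inj by simp
  ultimately show ?thesis
    unfolding HSP_via_def
    using A K ic_closed_hom_image[OF h A] ic_hom_inv_into[OF h A inj] by blast
qed

lemma ic_hom_into_prod:
  assumes "\<And>j. j \<in> J \<Longrightarrow> ic_hom (f j) A (G j)"
  shows "ic_hom (\<lambda>x. \<lambda>j\<in>J. f j x) A (ic_prod J G)"
  using assms unfolding ic_hom_def ic_prod_def by (auto intro!: ext)

section \<open>Implicitly closed fields\<close>

lemma ic_ops_to_ring: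
  "ic_carrier A = carrier (to_ring A)" "ic_zero A = \<zero>\<^bsub>to_ring A\<^esub>" "ic_one A = \<one>\<^bsub>to_ring A\<^esub>"
  "ic_add A x y = x \<oplus>\<^bsub>to_ring A\<^esub> y" "ic_mul A x y = x \<otimes>\<^bsub>to_ring A\<^esub> y"
  by (simp_all add: to_ring_def)

lemma ICF_field: "ICF B \<Longrightarrow> field (to_ring B)"
  by (simp add: ICF_def weakly_rooted_def Let_def)

lemma ICF_neg: "ICF B \<Longrightarrow> x \<in> carrier (to_ring B) \<Longrightarrow> ic_neg B x = \<ominus>\<^bsub>to_ring B\<^esub> x"
  by (simp add: ICF_def Let_def)

lemma ICF_star: "ICF B \<Longrightarrow> x \<in> carrier (to_ring B) \<Longrightarrow>
    ic_star B x = (if x = \<zero>\<^bsub>to_ring B\<^esub> then \<zero>\<^bsub>to_ring B\<^esub> else inv\<^bsub>to_ring B\<^esub> x)"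
  by (simp add: ICF_def Let_def)

lemma ICF_root_other_char:
  "ICF B \<Longrightarrow> prime p \<Longrightarrow> x \<in> carrier (to_ring B) \<Longrightarrow> rchar (to_ring B) \<noteq> p \<Longrightarrow>
    ic_root B p x = \<zero>\<^bsub>to_ring B\<^esub>"
  by (simp add: ICF_def Let_def)

lemma ICF_root:
  assumes B: "ICF B" and p: "prime p" and x: "x \<in> carrier (to_ring B)"
    and char: "rchar (to_ring B) = p"
  shows "ic_root B p x \<in> carrier (to_ring B) \<and> ic_root B p x [^]\<^bsub>to_ring B\<^esub> p = x"
proof -
  interpret field "to_ring B"
    using ICF_field[OF B] .
  obtain r where r: "r \<in> carrier (to_ring B)" "r [^]\<^bsub>to_ring B\<^esub> p = x"
    using B x char p unfolding ICF_def weakly_rooted_def Let_def by auto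
  have "ic_root B p x = (THE r. r \<in> carrier (to_ring B) \<and> r [^]\<^bsub>to_ring B\<^esub> p = x)"
    using B x char p unfolding ICF_def Let_def by auto
  with r show ?thesis
    using the_root_eq[OF p char r] by simp
qed

definition field_ic :: "'a ring \<Rightarrow> 'a icalg" where
  "field_ic T =
    \<lparr>ic_carrier = carrier T, ic_zero = \<zero>\<^bsub>T\<^esub>, ic_one = \<one>\<^bsub>T\<^esub>, ic_add = (\<oplus>\<^bsub>T\<^esub>),
     ic_neg = a_inv T, ic_mul = (\<otimes>\<^bsub>T\<^esub>),
     ic_star = (\<lambda>u. if u = \<zero>\<^bsub>T\<^esub> then \<zero>\<^bsub>T\<^esub> else inv\<^bsub>T\<^esub> u),
     ic_root = (\<lambda>p u. if rchar T = p then (THE r. r \<in> carrier T \<and> r [^]\<^bsub>T\<^esub> p = u) else \<zero>\<^bsub>T\<^esub>)\<rparr>"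

lemma to_ring_field_ic [simp]: "to_ring (field_ic T) = T"
  by (simp add: to_ring_def field_ic_def)

lemma ICF_field_ic: "weakly_rooted T \<Longrightarrow> ICF (field_ic T)"
  by (simp add: ICF_def Let_def) (simp add: field_ic_def)

abbreviation tx :: ic_term where "tx \<equiv> TVar 0"
abbreviation ty :: ic_term where "ty \<equiv> TVar 1"
abbreviation tz :: ic_term where "tz \<equiv> TVar 2"

primrec ic_numeral :: "nat \<Rightarrow> ic_term" where
  "ic_numeral 0 = TZero"
| "ic_numeral (Suc n) = TAdd (ic_numeral n) TOne"

primrec ic_power :: "ic_term \<Rightarrow> nat \<Rightarrow> ic_term" where
  "ic_power t 0 = TOne"
| "ic_power t (Suc n) = TMul (ic_power t n) t"

lemma ic_wf_numeral [simp]: "ic_wf_term (ic_numeral n)"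
  by (induction n) auto

lemma ic_wf_power [simp]: "ic_wf_term t \<Longrightarrow> ic_wf_term (ic_power t n)"
  by (induction n) auto

lemma ic_eval_numeral: "ic_eval A \<rho> (ic_numeral n) = [n] \<cdot>\<^bsub>to_ring A\<^esub> \<one>\<^bsub>to_ring A\<^esub>"
  by (induction n) (auto simp: add_pow_def to_ring_def)

lemma ic_eval_power: "ic_eval A \<rho> (ic_power t n) = ic_eval A \<rho> t [^]\<^bsub>to_ring A\<^esub> n"
  by (induction n) (auto simp: to_ring_def)

definition icm_ring_equations :: "(ic_term \<times> ic_term) set" where
  "icm_ring_equations =
     {(TAdd (TAdd tx ty) tz, TAdd tx (TAdd ty tz)), (TAdd tx ty, TAdd ty tx), (TAdd TZero tx, tx),
      (TAdd (TNeg tx) tx, TZero),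
      (TMul (TMul tx ty) tz, TMul tx (TMul ty tz)), (TMul tx ty, TMul ty tx), (TMul TOne tx, tx),
      (TMul (TAdd tx ty) tz, TAdd (TMul tx tz) (TMul ty tz)),
      (TMul (TMul tx (TStar tx)) tx, tx), (TMul (TMul (TStar tx) tx) (TStar tx), TStar tx)}"

text \<open>In a field, \<open>p p\<^sup>*\<close> is \<open>0\<close> in characteristic \<open>p\<close> and \<open>1\<close> otherwise, so these equations
  say \<open>r\<^sub>p(x)\<^sup>p = x\<close> in characteristic \<open>p\<close> and \<open>r\<^sub>p(x) = 0\<close> otherwise.\<close>

definition icm_root_equations :: "nat \<Rightarrow> (ic_term \<times> ic_term) set" where
  "icm_root_equations p =
     {(ic_power (TRoot p tx) p, TMul tx (TAdd TOne (TNeg (TMul (ic_numeral p) (TStar (ic_numeral p)))))),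
      (TMul (TRoot p tx) (ic_numeral p), TZero)}"

definition icm_equations :: "(ic_term \<times> ic_term) set" where
  "icm_equations = icm_ring_equations \<union> (\<Union>p\<in>{p. prime p}. icm_root_equations p)"

lemma icm_equations_wf: "(s, t) \<in> icm_equations \<Longrightarrow> ic_wf_term s \<and> ic_wf_term t"
  by (auto simp: icm_equations_def icm_ring_equations_def icm_root_equations_def)

lemma ICF_root_equations:
  assumes B: "ICF B" and p: "prime p" and x: "x \<in> carrier (to_ring B)"
  defines "c \<equiv> [p] \<cdot>\<^bsub>to_ring B\<^esub> \<one>\<^bsub>to_ring B\<^esub>"
  shows "ic_root B p x [^]\<^bsub>to_ring B\<^esub> p
           = x \<otimes>\<^bsub>to_ring B\<^esub> (\<one>\<^bsub>to_ring B\<^esub> \<ominus>\<^bsub>to_ring B\<^esub> c \<otimes>\<^bsub>to_ring B\<^esub> ic_star B c)"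
    and "ic_root B p x \<otimes>\<^bsub>to_ring B\<^esub> c = \<zero>\<^bsub>to_ring B\<^esub>"
proof -
  interpret field "to_ring B"
    using ICF_field[OF B] .
  have c: "c \<in> carrier (to_ring B)"
    by (simp add: c_def)
  have c_iff: "c = \<zero>\<^bsub>to_ring B\<^esub> \<longleftrightarrow> rchar (to_ring B) = p"
    using add_pow_prime_eq_zero_iff[OF p] by (simp add: c_def)
  show "ic_root B p x [^]\<^bsub>to_ring B\<^esub> p
           = x \<otimes>\<^bsub>to_ring B\<^esub> (\<one>\<^bsub>to_ring B\<^esub> \<ominus>\<^bsub>to_ring B\<^esub> c \<otimes>\<^bsub>to_ring B\<^esub> ic_star B c)"
    using ICF_root[OF B p x] ICF_root_other_char[OF B p x] ICF_star[OF B c] c c_iff x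
      field_Units prime_gt_0_nat[OF p]
    by (cases "c = \<zero>\<^bsub>to_ring B\<^esub>") (auto simp: minus_eq r_neg nat_pow_zero)
  show "ic_root B p x \<otimes>\<^bsub>to_ring B\<^esub> c = \<zero>\<^bsub>to_ring B\<^esub>"
    using ICF_root[OF B p x] ICF_root_other_char[OF B p x] c c_iff
    by (cases "c = \<zero>\<^bsub>to_ring B\<^esub>") auto
qed

lemma ICF_satisfies_icm_equations:
  assumes B: "ICF B" and st: "(s, t) \<in> icm_equations"
  shows "ic_satisfies B s t"
  unfolding ic_satisfies_def
proof (intro allI impI)
  interpret field "to_ring B"
    using ICF_field[OF B] .
  fix \<rho> :: "nat \<Rightarrow> _" assume "range \<rho> \<subseteq> ic_carrier B"
  then have \<rho>: "\<rho> n \<in> carrier (to_ring B)" for n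
    by (auto simp: ic_ops_to_ring)
  have star: "ic_star B x \<in> carrier (to_ring B)"
    "x \<otimes>\<^bsub>to_ring B\<^esub> ic_star B x \<otimes>\<^bsub>to_ring B\<^esub> x = x"
    "ic_star B x \<otimes>\<^bsub>to_ring B\<^esub> x \<otimes>\<^bsub>to_ring B\<^esub> ic_star B x = ic_star B x"
    if "x \<in> carrier (to_ring B)" for x
    using ICF_star[OF B that] that field_Units by auto
  from st consider "(s, t) \<in> icm_ring_equations" | p where "prime p" "(s, t) \<in> icm_root_equations p"
    unfolding icm_equations_def by auto
  then show "ic_eval B \<rho> s = ic_eval B \<rho> t"
  proof cases
    case 1
    then show ?thesis
      unfolding icm_ring_equations_def
      by (elim insertE emptyE; simp add: ic_ops_to_ring ICF_neg[OF B] \<rho> star;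
          simp add: a_ac m_ac l_distr r_distr r_neg \<rho>)
  next
    case (2 p)
    then show ?thesis
      unfolding icm_root_equations_def
      using ICF_root_equations[OF B _ \<rho>] ICF_neg[OF B] star(1) \<rho>
      by (auto simp: ic_eval_power ic_eval_numeral ic_ops_to_ring minus_eq)
  qed
qed

lemma is_discriminator_term_ICF_disc_t: "is_discriminator_term ICF disc_t"
  unfolding is_discriminator_term_def
proof (intro allI impI ballI)
  fix B :: "'a icalg" and a b c
  assume B: "ICF B" and abc: "a \<in> ic_carrier B" "b \<in> ic_carrier B" "c \<in> ic_carrier B"
  interpret field "to_ring B"
    using ICF_field[OF B] .
  have abc': "a \<in> carrier (to_ring B)" "b \<in> carrier (to_ring B)" "c \<in> carrier (to_ring B)"
    using abc by (simp_all add: ic_ops_to_ring)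
  define d where "d = a \<ominus>\<^bsub>to_ring B\<^esub> b"
  have d: "d \<in> carrier (to_ring B)" "ic_add B a (ic_neg B b) = d"
    using abc' ICF_neg[OF B] by (simp_all add: d_def ic_ops_to_ring minus_eq)
  have "ic_mul B d (ic_star B d) = (if a = b then \<zero>\<^bsub>to_ring B\<^esub> else \<one>\<^bsub>to_ring B\<^esub>)"
    using d(1) abc' ICF_star[OF B d(1)] field_Units by (auto simp: d_def ic_ops_to_ring)
  then show "disc_t B a b c = (if a = b then c else a)"
    using abc' d ICF_neg[OF B] by (simp add: disc_t_def ic_ops_to_ring minus_eq r_neg)
qed

section \<open>Algebras satisfying the equations\<close>

locale icm =
  fixes A :: "'a icalg"
  assumes alg: "ic_alg A"
    and satisfies_equations: "(s, t) \<in> icm_equations \<Longrightarrow> ic_satisfies A s t"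
begin

abbreviation R :: "'a ring" where "R \<equiv> to_ring A"

lemma closed: "ic_closed A (carrier R)"
  using alg by (simp add: ic_alg_def ic_ops_to_ring)

lemma equation_at:
  assumes "(s, t) \<in> icm_equations" "x \<in> carrier R" "y \<in> carrier R" "z \<in> carrier R"
  shows "ic_eval A (\<lambda>n. if n = 0 then x else if n = 1 then y else z) s
       = ic_eval A (\<lambda>n. if n = 0 then x else if n = 1 then y else z) t"
proof -
  have "range (\<lambda>n. if n = 0 then x else if n = 1 then y else z) \<subseteq> ic_carrier A"
    using assms(2-4) by (auto simp: ic_ops_to_ring)
  then show ?thesis
    using satisfies_equations[OF assms(1)] unfolding ic_satisfies_def by blast
qed

lemma ring_equation_at:
  assumes "(s, t) \<in> icm_ring_equations" "x \<in> carrier R" "y \<in> carrier R" "z \<in> carrier R"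
  shows "ic_eval A (\<lambda>n. if n = 0 then x else if n = 1 then y else z) s
       = ic_eval A (\<lambda>n. if n = 0 then x else if n = 1 then y else z) t"
  using equation_at assms by (simp add: icm_equations_def)

lemma root_equation_at:
  assumes "prime p" "(s, t) \<in> icm_root_equations p" "x \<in> carrier R"
  shows "ic_eval A (\<lambda>n. x) s = ic_eval A (\<lambda>n. x) t"
  using equation_at[of s t x x x] assms by (auto simp: icm_equations_def cong: if_cong)

lemma is_cring: "cring R"
proof (rule cringI)
  show "abelian_group R"
  proof (rule abelian_groupI)
    fix x y z assume xyz: "x \<in> carrier R" "y \<in> carrier R" "z \<in> carrier R"
    show "x \<oplus>\<^bsub>R\<^esub> y \<in> carrier R"
      using closed xyz by (simp add: ic_closed_def ic_ops_to_ring)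
    show "x \<oplus>\<^bsub>R\<^esub> y \<oplus>\<^bsub>R\<^esub> z = x \<oplus>\<^bsub>R\<^esub> (y \<oplus>\<^bsub>R\<^esub> z)"
      using ring_equation_at[of "TAdd (TAdd tx ty) tz" "TAdd tx (TAdd ty tz)"] xyz
      by (simp add: icm_ring_equations_def to_ring_def)
    show "x \<oplus>\<^bsub>R\<^esub> y = y \<oplus>\<^bsub>R\<^esub> x"
      using ring_equation_at[of "TAdd tx ty" "TAdd ty tx"] xyz
      by (simp add: icm_ring_equations_def to_ring_def)
    show "\<zero>\<^bsub>R\<^esub> \<oplus>\<^bsub>R\<^esub> x = x"
      using ring_equation_at[of "TAdd TZero tx" tx] xyz
      by (simp add: icm_ring_equations_def to_ring_def)
    show "\<exists>y\<in>carrier R. y \<oplus>\<^bsub>R\<^esub> x = \<zero>\<^bsub>R\<^esub>"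
      using ring_equation_at[of "TAdd (TNeg tx) tx" TZero] xyz closed
      by (intro bexI[of _ "ic_neg A x"]) (auto simp: icm_ring_equations_def to_ring_def ic_closed_def)
  next
    show "\<zero>\<^bsub>R\<^esub> \<in> carrier R"
      using closed by (simp add: ic_closed_def ic_ops_to_ring)
  qed
next
  show "comm_monoid R"
  proof (rule comm_monoidI)
    fix x y z assume xyz: "x \<in> carrier R" "y \<in> carrier R" "z \<in> carrier R"
    show "x \<otimes>\<^bsub>R\<^esub> y \<in> carrier R"
      using closed xyz by (simp add: ic_closed_def ic_ops_to_ring)
    show "x \<otimes>\<^bsub>R\<^esub> y \<otimes>\<^bsub>R\<^esub> z = x \<otimes>\<^bsub>R\<^esub> (y \<otimes>\<^bsub>R\<^esub> z)"
      using ring_equation_at[of "TMul (TMul tx ty) tz" "TMul tx (TMul ty tz)"] xyz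
      by (simp add: icm_ring_equations_def to_ring_def)
    show "x \<otimes>\<^bsub>R\<^esub> y = y \<otimes>\<^bsub>R\<^esub> x"
      using ring_equation_at[of "TMul tx ty" "TMul ty tx"] xyz
      by (simp add: icm_ring_equations_def to_ring_def)
    show "\<one>\<^bsub>R\<^esub> \<otimes>\<^bsub>R\<^esub> x = x"
      using ring_equation_at[of "TMul TOne tx" tx] xyz
      by (simp add: icm_ring_equations_def to_ring_def)
  next
    show "\<one>\<^bsub>R\<^esub> \<in> carrier R"
      using closed by (simp add: ic_closed_def ic_ops_to_ring)
  qed
next
  fix x y z assume xyz: "x \<in> carrier R" "y \<in> carrier R" "z \<in> carrier R"
  show "(x \<oplus>\<^bsub>R\<^esub> y) \<otimes>\<^bsub>R\<^esub> z = x \<otimes>\<^bsub>R\<^esub> z \<oplus>\<^bsub>R\<^esub> y \<otimes>\<^bsub>R\<^esub> z"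
    using ring_equation_at[of "TMul (TAdd tx ty) tz" "TAdd (TMul tx tz) (TMul ty tz)"] xyz
    by (simp add: icm_ring_equations_def to_ring_def)
qed

sublocale R: cring R
  by (rule is_cring)

lemma neg_closed: "x \<in> carrier R \<Longrightarrow> ic_neg A x \<in> carrier R"
  using closed by (simp add: ic_closed_def)

lemma star_closed: "x \<in> carrier R \<Longrightarrow> ic_star A x \<in> carrier R"
  using closed by (simp add: ic_closed_def)

lemma root_closed: "prime p \<Longrightarrow> x \<in> carrier R \<Longrightarrow> ic_root A p x \<in> carrier R"
  using closed by (simp add: ic_closed_def)

lemma neg_eq: "x \<in> carrier R \<Longrightarrow> ic_neg A x = \<ominus>\<^bsub>R\<^esub> x"
  using ring_equation_at[of "TAdd (TNeg tx) tx" TZero x x x] neg_closed[of x]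
  by (intro R.minus_equality[symmetric]) (simp_all add: icm_ring_equations_def to_ring_def)

lemma mult_star_mult: "x \<in> carrier R \<Longrightarrow> x \<otimes>\<^bsub>R\<^esub> ic_star A x \<otimes>\<^bsub>R\<^esub> x = x"
  using ring_equation_at[of "TMul (TMul tx (TStar tx)) tx" tx x x x]
  by (simp add: icm_ring_equations_def to_ring_def)

lemma star_mult_star: "x \<in> carrier R \<Longrightarrow> ic_star A x \<otimes>\<^bsub>R\<^esub> x \<otimes>\<^bsub>R\<^esub> ic_star A x = ic_star A x"
  using ring_equation_at[of "TMul (TMul (TStar tx) tx) (TStar tx)" "TStar tx" x x x]
  by (simp add: icm_ring_equations_def to_ring_def)

lemma root_equations:
  assumes p: "prime p" and x: "x \<in> carrier R"
  defines "c \<equiv> [p] \<cdot>\<^bsub>R\<^esub> \<one>\<^bsub>R\<^esub>"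
  shows "ic_root A p x [^]\<^bsub>R\<^esub> p = x \<otimes>\<^bsub>R\<^esub> (\<one>\<^bsub>R\<^esub> \<ominus>\<^bsub>R\<^esub> c \<otimes>\<^bsub>R\<^esub> ic_star A c)"
    and "ic_root A p x \<otimes>\<^bsub>R\<^esub> c = \<zero>\<^bsub>R\<^esub>"
proof -
  have "ic_eval A (\<lambda>n. x) (ic_power (TRoot p tx) p)
      = ic_eval A (\<lambda>n. x) (TMul tx (TAdd TOne (TNeg (TMul (ic_numeral p) (TStar (ic_numeral p))))))"
    "ic_eval A (\<lambda>n. x) (TMul (TRoot p tx) (ic_numeral p)) = ic_eval A (\<lambda>n. x) TZero"
    by (rule root_equation_at[OF p _ x], simp add: icm_root_equations_def)+
  then show "ic_root A p x [^]\<^bsub>R\<^esub> p = x \<otimes>\<^bsub>R\<^esub> (\<one>\<^bsub>R\<^esub> \<ominus>\<^bsub>R\<^esub> c \<otimes>\<^bsub>R\<^esub> ic_star A c)"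
    and "ic_root A p x \<otimes>\<^bsub>R\<^esub> c = \<zero>\<^bsub>R\<^esub>"
    using x star_closed[of c]
    by (simp_all add: ic_eval_power ic_eval_numeral c_def neg_eq R.minus_eq ic_ops_to_ring)
qed

end

lemma HSP_via_ICF_icm:
  assumes "HSP_via ICF I F A"
  shows "icm A"
proof
  show "ic_alg A"
    using assms by (simp add: HSP_via_def)
  fix s t assume "(s, t) \<in> icm_equations"
  then show "ic_satisfies A s t"
    using HSP_via_satisfies[OF assms] ICF_satisfies_icm_equations icm_equations_wf by blast
qed

definition quotient_ic :: "'a icalg \<Rightarrow> 'a set \<Rightarrow> 'a icalg" where
  "quotient_ic A M = field_ic (image_ring (coset_rep (to_ring A) M) (to_ring A))"

locale icm_maximal = icm +
  fixes M :: "'a set"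
  assumes maximal: "maximalideal M R"
begin

abbreviation \<pi> :: "'a \<Rightarrow> 'a" where "\<pi> \<equiv> coset_rep R M"
abbreviation T :: "'a ring" where "T \<equiv> image_ring \<pi> R"

lemma weak_morphism: "weak_ring_morphism \<pi> M R"
  using maximalideal.axioms(1)[OF maximal] by (rule ideal.weak_ring_morphism_coset_rep)

sublocale T: field T
  using R.image_ring_is_field[OF weak_morphism maximalideal.quotient_is_field[OF maximal is_cring]] .

sublocale \<pi>: ring_hom_ring R T \<pi>
  using R.weak_ring_morphism_ring_hom[OF weak_morphism] .

lemma \<pi>_eq_iff: "x \<in> carrier R \<Longrightarrow> y \<in> carrier R \<Longrightarrow> \<pi> x = \<pi> y \<longleftrightarrow> x \<ominus>\<^bsub>R\<^esub> y \<in> M"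
  using weak_ring_morphism.inj_mod_ideal[OF weak_morphism] .

lemma \<pi>_star:
  assumes x: "x \<in> carrier R"
  shows "\<pi> (ic_star A x) = (if \<pi> x = \<zero>\<^bsub>T\<^esub> then \<zero>\<^bsub>T\<^esub> else inv\<^bsub>T\<^esub> (\<pi> x))"
proof (rule T.weak_inverse_unique)
  show "\<pi> x \<otimes>\<^bsub>T\<^esub> \<pi> (ic_star A x) \<otimes>\<^bsub>T\<^esub> \<pi> x = \<pi> x"
    using mult_star_mult[OF x] star_closed[OF x] x by (metis \<pi>.hom_mult R.m_closed)
  show "\<pi> (ic_star A x) \<otimes>\<^bsub>T\<^esub> \<pi> x \<otimes>\<^bsub>T\<^esub> \<pi> (ic_star A x) = \<pi> (ic_star A x)"
    using star_mult_star[OF x] star_closed[OF x] x by (metis \<pi>.hom_mult R.m_closed)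
qed (use x star_closed in auto)

lemma \<pi>_add_pow_one: "\<pi> ([(n::nat)] \<cdot>\<^bsub>R\<^esub> \<one>\<^bsub>R\<^esub>) = [n] \<cdot>\<^bsub>T\<^esub> \<one>\<^bsub>T\<^esub>"
  by (induction n) (simp_all add: R.add.nat_pow_Suc T.add.nat_pow_Suc)

lemma \<pi>_root_other_char:
  assumes p: "prime p" and char: "rchar T \<noteq> p" and x: "x \<in> carrier R"
  shows "\<pi> (ic_root A p x) = \<zero>\<^bsub>T\<^esub>"
proof -
  have "\<pi> (ic_root A p x) \<otimes>\<^bsub>T\<^esub> [p] \<cdot>\<^bsub>T\<^esub> \<one>\<^bsub>T\<^esub> = \<zero>\<^bsub>T\<^esub>"
    using root_equations(2)[OF p x] root_closed[OF p x]
    by (metis \<pi>_add_pow_one \<pi>.hom_mult \<pi>.hom_zero R.add.nat_pow_closed R.one_closed)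
  moreover have "[p] \<cdot>\<^bsub>T\<^esub> \<one>\<^bsub>T\<^esub> \<noteq> \<zero>\<^bsub>T\<^esub>"
    using T.add_pow_prime_eq_zero_iff[OF p] char by simp
  moreover have "\<pi> (ic_root A p x) \<in> carrier T"
    using root_closed[OF p x] by simp
  ultimately show ?thesis
    using T.integral by blast
qed

lemma \<pi>_root_char:
  assumes p: "prime p" and char: "rchar T = p" and x: "x \<in> carrier R"
  shows "\<pi> (ic_root A p x) [^]\<^bsub>T\<^esub> p = \<pi> x"
proof -
  define c where "c = [p] \<cdot>\<^bsub>R\<^esub> \<one>\<^bsub>R\<^esub>"
  have c: "c \<in> carrier R" "\<pi> c = \<zero>\<^bsub>T\<^esub>"
    using \<pi>_add_pow_one T.add_pow_prime_eq_zero_iff[OF p] char by (simp_all add: c_def)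
  have "\<pi> (ic_root A p x) [^]\<^bsub>T\<^esub> p = \<pi> (ic_root A p x [^]\<^bsub>R\<^esub> p)"
    using root_closed[OF p x] by (simp add: \<pi>.hom_nat_pow)
  also have "\<dots> = \<pi> (x \<otimes>\<^bsub>R\<^esub> (\<one>\<^bsub>R\<^esub> \<ominus>\<^bsub>R\<^esub> c \<otimes>\<^bsub>R\<^esub> ic_star A c))"
    using root_equations(1)[OF p x] by (simp add: c_def)
  also have "\<dots> = \<pi> x"
    using x c star_closed[OF c(1)] by (simp add: R.minus_eq T.minus_eq)
  finally show ?thesis .
qed

lemma weakly_rooted_T: "weakly_rooted T"
  unfolding weakly_rooted_def
proof (intro conjI)
  show "field T" ..
  show "rchar T = 0 \<or> prime (rchar T) \<and> (\<forall>a\<in>carrier T. \<exists>r\<in>carrier T. r [^]\<^bsub>T\<^esub> rchar T = a)"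
  proof (cases "rchar T = 0")
    case False
    then have p: "prime (rchar T)"
      using T.rchar_zero_or_prime by simp
    have "\<exists>r\<in>carrier T. r [^]\<^bsub>T\<^esub> rchar T = a" if "a \<in> carrier T" for a
    proof -
      have "a \<in> \<pi> ` carrier R"
        using that by (simp add: image_ring_carrier)
      then obtain x where x: "x \<in> carrier R" "a = \<pi> x"
        by blast
      then show ?thesis
        using \<pi>_root_char[OF p refl x(1)] root_closed[OF p x(1)] by auto
    qed
    with p show ?thesis
      by blast
  qed simp
qed

lemma ICF_quotient_ic: "ICF (quotient_ic A M)"
  unfolding quotient_ic_def using weakly_rooted_T by (rule ICF_field_ic)

lemma ic_hom_quotient_ic: "ic_hom \<pi> A (quotient_ic A M)"
  unfolding ic_hom_def quotient_ic_def
proof (intro conjI ballI allI impI)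
  fix x assume "x \<in> ic_carrier A"
  then have x: "x \<in> carrier R"
    by (simp add: ic_ops_to_ring)
  show "\<pi> x \<in> ic_carrier (field_ic T)"
    using x by (simp add: field_ic_def)
  show "\<pi> (ic_neg A x) = ic_neg (field_ic T) (\<pi> x)"
    using x by (simp add: field_ic_def neg_eq)
  show "\<pi> (ic_star A x) = ic_star (field_ic T) (\<pi> x)"
    using x by (simp add: field_ic_def \<pi>_star)
  fix p :: nat assume p: "prime p"
  show "\<pi> (ic_root A p x) = ic_root (field_ic T) p (\<pi> x)"
  proof (cases "rchar T = p")
    case True
    then show ?thesis
      using T.the_root_eq[OF p True _ \<pi>_root_char[OF p True x]] root_closed[OF p x]
      by (simp add: field_ic_def)
  next
    case False
    then show ?thesis
      using \<pi>_root_other_char[OF p False x] by (simp add: field_ic_def)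
  qed
next
  fix x y assume "x \<in> ic_carrier A" "y \<in> ic_carrier A"
  then show "\<pi> (ic_add A x y) = ic_add (field_ic T) (\<pi> x) (\<pi> y)"
    and "\<pi> (ic_mul A x y) = ic_mul (field_ic T) (\<pi> x) (\<pi> y)"
    by (simp_all add: field_ic_def ic_ops_to_ring)
qed (simp_all add: field_ic_def ic_ops_to_ring(2,3)[of A])

end

lemma (in icm) exists_maximalideal_separating:
  assumes "a \<in> carrier R" "b \<in> carrier R" "a \<noteq> b"
  shows "\<exists>M. maximalideal M R \<and> a \<ominus>\<^bsub>R\<^esub> b \<notin> M"
  using assms R.exists_maximalideal_not_mem[OF _ _ star_closed mult_star_mult] by simp

lemma (in icm) ISP_via_ICF_off_diagonal:
  "\<exists>G :: 'a \<times> 'a \<Rightarrow> 'a icalg. ISP_via ICF {(a, b). a \<in> ic_carrier A \<and> b \<in> ic_carrier A \<and> a \<noteq> b} G A"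
proof -
  define J where "J = {(a, b). a \<in> ic_carrier A \<and> b \<in> ic_carrier A \<and> a \<noteq> b}"
  have "\<forall>j\<in>J. \<exists>M. maximalideal M R \<and> fst j \<ominus>\<^bsub>R\<^esub> snd j \<notin> M"
    using exists_maximalideal_separating by (auto simp: J_def ic_ops_to_ring)
  from bchoice[OF this] obtain M
    where M: "\<forall>j\<in>J. maximalideal (M j) R \<and> fst j \<ominus>\<^bsub>R\<^esub> snd j \<notin> M j"
    by blast
  then have max: "icm_maximal A (M j)" if "j \<in> J" for j
    using that icm_axioms by (simp add: icm_maximal_def icm_maximal_axioms_def)
  define h where "h x = (\<lambda>j\<in>J. coset_rep R (M j) x)" for x
  have hom: "ic_hom h A (ic_prod J (\<lambda>j. quotient_ic A (M j)))"
    unfolding h_def using icm_maximal.ic_hom_quotient_ic[OF max] by (rule ic_hom_into_prod)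
  have inj: "inj_on h (ic_carrier A)"
  proof (rule inj_onI, rule ccontr)
    fix a b assume ab: "a \<in> ic_carrier A" "b \<in> ic_carrier A" "h a = h b" "a \<noteq> b"
    then have j: "(a, b) \<in> J"
      by (simp add: J_def)
    have "coset_rep R (M (a, b)) a = coset_rep R (M (a, b)) b"
      using fun_cong[OF ab(3), of "(a, b)"] j by (simp add: h_def)
    with j ab(1,2) show False
      using bspec[OF M j] icm_maximal.\<pi>_eq_iff[OF max[OF j]] by (simp add: ic_ops_to_ring)
  qed
  have "ISP_via ICF J (\<lambda>j. quotient_ic A (M j)) A"
    unfolding ISP_via_def using alg icm_maximal.ICF_quotient_ic[OF max] hom inj by blast
  then show ?thesis
    unfolding J_def by blast
qed

theorem mainTheorem7:
  fixes A :: "'a icalg"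
  shows "(\<forall>(I :: 'i set) (F :: 'i \<Rightarrow> 'k icalg). ISP_via ICF I F A \<longrightarrow> HSP_via ICF I F A)
       \<and> (\<forall>(I :: 'i set) (F :: 'i \<Rightarrow> 'k icalg). HSP_via ICF I F A \<longrightarrow>
            (\<exists>(J :: ('a \<times> 'a) set) (G :: 'a \<times> 'a \<Rightarrow> 'a icalg). ISP_via ICF J G A))
       \<and> is_discriminator_term (ICF :: 'k icalg \<Rightarrow> bool) disc_t"
proof (intro conjI allI impI)
  fix I :: "'i set" and F :: "'i \<Rightarrow> 'k icalg"
  assume "ISP_via ICF I F A"
  then show "HSP_via ICF I F A"
    by (rule ISP_via_imp_HSP_via)
next
  fix I :: "'i set" and F :: "'i \<Rightarrow> 'k icalg"
  assume "HSP_via ICF I F A"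
  then interpret icm A
    by (rule HSP_via_ICF_icm)
  show "\<exists>(J :: ('a \<times> 'a) set) (G :: 'a \<times> 'a \<Rightarrow> 'a icalg). ISP_via ICF J G A"
    using ISP_via_ICF_off_diagonal by blast
qed (rule is_discriminator_term_ICF_disc_t)

end
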